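(* For $m,n,s\in\mathbb{N}$, $${}_{s+1}F_s\left(\{\tfrac12\}^{s},1-n;\{\tfrac32\}^{s};1\right)=\sum_{k=1}^n(-1)^{k-1}\binom{n}{k}\overline{H}_k(s),$$ $${}_{s+1}F_s\left(\{\tfrac12\}^{s},1-n;\{\tfrac32\}^{s};-1\right)=\sum_{k=1}^n(-1)^{k-1}\binom{n}{k}\overline{H}_k(\overline{s}),$$ and $${}_2F_1(1,1-n;m+n;-1)=(m-1)!\,(m+n-1)\sum_{k=1}^n(-1)^{k-1}\binom{n}{k}G_{m,k}.$$
   Context: $\mathbb{N}$ is the set of positive integers; $\{a\}^s$ denotes $a$ repeated $s$ times. $\overline{H}_k(s)=\sum_{j=0}^{k-1}\frac{1}{(2j+1)^s}$, $\overline{H}_k(\overline{s})=\sum_{j=0}^{k-1}\frac{(-1)^j}{(2j+1)^s}$, and $G_{m,k}=\sum_{j=0}^{k-1}\frac{1}{(2j+1)(2j+2)\cdots(2j+m)}$. ${}_{s+1}F_s(a_1,\ldots,a_{s+1};b_1,\ldots,b_s;x)=\sum_{i\geq 0}\frac{(a_1)_i\cdots(a_{s+1})_i}{(b_1)_i\cdots(b_s)_i}\frac{x^i}{i!}$, with $(a)_0=1$, $(a)_i=a(a+1)\cdots(a+i-1)$ for $i>0$ (a finite sum here since $1-n\leq 0$ is an integer). *)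

theory Defs
  imports "HOL-Analysis.Analysis"
begin

text \<open>Defined as an infinite series (suminf); in all uses here it terminates since an upper
  parameter is a nonpositive integer.\<close>
definition hypergeom :: "real list \<Rightarrow> real list \<Rightarrow> real \<Rightarrow> real" where
  "hypergeom as bs x =
     (\<Sum>i. (\<Prod>a\<leftarrow>as. pochhammer a i) / (\<Prod>b\<leftarrow>bs. pochhammer b i) * x ^ i / fact i)"

definition Hbar :: "nat \<Rightarrow> nat \<Rightarrow> real" where
  "Hbar k s = (\<Sum>j<k. 1 / (2 * real j + 1) ^ s)"

definition Hbar_alt :: "nat \<Rightarrow> nat \<Rightarrow> real" where
  "Hbar_alt k s = (\<Sum>j<k. (-1) ^ j / (2 * real j + 1) ^ s)"

definition G :: "nat \<Rightarrow> nat \<Rightarrow> real" where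
  "G m k = (\<Sum>j<k. 1 / (\<Prod>i=1..m. 2 * real j + real i))"

end

theory Submission
  imports Defs
begin

(* All three series terminate, because the upper parameter 1 - n kills every Pochhammer factor of
   index at least n, and their terms carry the coefficient (-1)^j C(n - 1, j).  Since the tail
   sums of an alternating binomial row are again binomial coefficients, a sum
   sum_{j<n} (-1)^j C(n - 1, j) a_j is the binomial transform
   sum_{k=1..n} (-1)^(k-1) C(n, k) (a_0 + ... + a_(k-1)) of the partial sums of a.
   That already gives the two 1/2, 3/2 identities.  For the 2F1 identity, write
   (m-1)!/((2j+1)...(2j+m)) as the Beta integral of t^(2j) (1-t)^(m-1): summing against
   (-1)^j C(n - 1, j) gives the integral of (1 - t^2)^(n-1) (1-t)^(m-1) = (1+t)^(n-1) (1-t)^(n+m-2),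
   whose binomial expansion is a sum of Beta values equal to the terms of 2F1(1, 1-n; m+n; -1). *)

lemma sum_alternating_binomial_tail:
  assumes "j < n"
  shows "(\<Sum>k=Suc j..n. (-1) ^ (k - 1) * of_nat (n choose k)) =
         ((-1) ^ j * of_nat (n - 1 choose j) :: 'a::field_char_0)"
proof -
  have "(\<Sum>k=Suc j..n. (-1) ^ (k - 1) * of_nat (n choose k)) =
      - (\<Sum>k=Suc j..n. (-1) ^ k * (of_nat (n choose k) :: 'a))"
    by (auto simp: sum_negf[symmetric] intro!: sum.cong dest!: Suc_le_D)
  also have "(\<Sum>k=Suc j..n. (-1) ^ k * of_nat (n choose k)) =
      - (\<Sum>k\<le>j. (-1) ^ k * (of_nat (n choose k) :: 'a))"
  proof -
    have "{..n} = {..j} \<union> {Suc j..n}" using assms by auto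
    then have "(\<Sum>k\<le>j. (-1) ^ k * of_nat (n choose k)) + (\<Sum>k=Suc j..n. (-1) ^ k * of_nat (n choose k)) =
        (\<Sum>k\<le>n. (-1) ^ k * (of_nat (n choose k) :: 'a))"
      by (simp add: sum.union_disjoint)
    also have "\<dots> = 0"
      using assms by (intro choose_alternating_sum) simp
    finally show ?thesis by (simp add: eq_neg_iff_add_eq_0 add.commute)
  qed
  also have "(\<Sum>k\<le>j. (-1) ^ k * of_nat (n choose k)) = (-1) ^ j * (of_nat (n - 1 choose j) :: 'a)"
    using gbinomial_sum_lower_neg[of "of_nat n :: 'a" j] assms
    by (simp add: binomial_gbinomial mult.commute)
  finally show ?thesis by simp
qed

lemma binomial_transform_partial_sums:
  "(\<Sum>k=1..n. (-1) ^ (k - 1) * of_nat (n choose k) * (\<Sum>j<k. a j)) =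
   (\<Sum>j<n. (-1) ^ j * of_nat (n - 1 choose j) * (a j :: 'a::field_char_0))"
proof -
  have "(\<Sum>k=1..n. (-1) ^ (k - 1) * of_nat (n choose k) * (\<Sum>j<k. a j)) =
        (\<Sum>k\<le>n. \<Sum>j<k. (-1) ^ (k - 1) * of_nat (n choose k) * a j)"
    by (simp add: sum_distrib_left atMost_atLeast0 sum.atLeast_Suc_atMost)
  also have "\<dots> = (\<Sum>j<n. (\<Sum>k=Suc j..n. (-1) ^ (k - 1) * of_nat (n choose k)) * a j)"
    by (simp add: sum.nested_swap' sum_distrib_right)
  also have "\<dots> = (\<Sum>j<n. (-1) ^ j * of_nat (n - 1 choose j) * a j)"
    by (intro sum.cong refl) (metis lessThan_iff sum_alternating_binomial_tail)
  finally show ?thesis .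
qed

lemma pochhammer_minus_of_nat_div_fact:
  "pochhammer (- of_nat N) i / fact i = ((-1) ^ i * of_nat (N choose i) :: 'a::field_char_0)"
  by (simp add: binomial_gbinomial gbinomial_pochhammer)

lemma pochhammer_div_pochhammer_plus1:
  assumes "a > 0"
  shows "pochhammer a i / pochhammer (a + 1) i = a / (a + of_nat i :: 'a::linordered_field)"
proof -
  have "a * pochhammer (a + 1) i = (a + of_nat i) * pochhammer a i"
    by (metis pochhammer_rec pochhammer_rec')
  moreover have "pochhammer (a + 1) i > 0" "a + of_nat i > 0"
    using assms by (simp_all add: pochhammer_pos add_pos_nonneg)
  ultimately show ?thesis by (simp add: field_simps)
qed

lemma pochhammer_plus1_eq_prod:
  "pochhammer (x + 1) m = (\<Prod>i=1..m. x + of_nat i)"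
  by (simp add: pochhammer_prod atLeast0LessThan prod.atLeast1_atMost_eq add_ac)

lemma hypergeom_terminating:
  assumes "- real N \<in> set as"
  shows "hypergeom as bs x =
    (\<Sum>i\<le>N. (\<Prod>a\<leftarrow>as. pochhammer a i) / (\<Prod>b\<leftarrow>bs. pochhammer b i) * x ^ i / fact i)"
  unfolding hypergeom_def
proof (rule suminf_finite)
  show "(\<Prod>a\<leftarrow>as. pochhammer a i) / (\<Prod>b\<leftarrow>bs. pochhammer b i) * x ^ i / fact i = 0"
    if "i \<notin> {..N}" for i
  proof -
    have "pochhammer (- real N) i = 0"
      using that by (intro pochhammer_of_nat_eq_0_lemma) simp
    then have "(\<Prod>a\<leftarrow>as. pochhammer a i) = 0"
      using assms by (force simp: prod_list_zero_iff)
    then show ?thesis by simp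
  qed
qed simp

lemma hypergeom_halves_binomial_transform:
  assumes "n \<ge> 1"
  shows "hypergeom (replicate s (1/2) @ [1 - real n]) (replicate s (3/2)) x =
    (\<Sum>k=1..n. (-1) ^ (k - 1) * real (n choose k) * (\<Sum>j<k. x ^ j / (2 * real j + 1) ^ s))"
proof -
  obtain N where n: "n = Suc N" using assms by (cases n) auto
  then have upper: "1 - real n = - real N" by simp
  have half: "pochhammer (1/2) i / pochhammer (3/2) i = 1 / (2 * real i + 1)" for i
    using pochhammer_div_pochhammer_plus1[of "1/2 :: real" i] by simp
  have "hypergeom (replicate s (1/2) @ [1 - real n]) (replicate s (3/2)) x =
      (\<Sum>i\<le>N. (\<Prod>a\<leftarrow>replicate s (1/2) @ [- real N]. pochhammer a i) /
        (\<Prod>b\<leftarrow>replicate s (3/2). pochhammer b i) * x ^ i / fact i)"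
    unfolding upper by (rule hypergeom_terminating) simp
  also have "\<dots> = (\<Sum>i\<le>N. (pochhammer (1/2) i / pochhammer (3/2) i) ^ s *
      (pochhammer (- real N) i / fact i) * x ^ i)"
    by (simp add: power_divide)
  also have "\<dots> = (\<Sum>j<n. (-1) ^ j * real (n - 1 choose j) * (x ^ j / (2 * real j + 1) ^ s))"
    by (simp add: n half pochhammer_minus_of_nat_div_fact power_divide lessThan_Suc_atMost)
  also have "\<dots> = (\<Sum>k=1..n. (-1) ^ (k - 1) * real (n choose k) * (\<Sum>j<k. x ^ j / (2 * real j + 1) ^ s))"
    by (rule binomial_transform_partial_sums[symmetric])
  finally show ?thesis .
qed

lemma hypergeom_2F1_one_neg_one:
  "hypergeom [1, - real N] [c] (-1) = (\<Sum>i\<le>N. real (N choose i) * fact i / pochhammer c i)"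
proof -
  have "hypergeom [1, - real N] [c] (-1) =
      (\<Sum>i\<le>N. pochhammer 1 i * pochhammer (- real N) i / pochhammer c i * (-1) ^ i / fact i)"
    using hypergeom_terminating[of N "[1, - real N]" "[c]" "-1"] by simp
  also have "\<dots> = (\<Sum>i\<le>N. real (N choose i) * fact i / pochhammer c i)"
  proof (intro sum.cong refl)
    fix i
    have "pochhammer (- real N) i = (-1) ^ i * real (N choose i) * fact i"
      using pochhammer_minus_of_nat_div_fact[of N i] by (simp add: field_simps)
    then show "pochhammer 1 i * pochhammer (- real N) i / pochhammer c i * (-1) ^ i / fact i =
        real (N choose i) * fact i / pochhammer c i"
      by (simp flip: pochhammer_fact power_add)
  qed
  finally show ?thesis .
qed

lemma Beta_of_nat_plus1_left:
  assumes "y > 0"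
  shows "Beta (real a + 1) y = fact a / pochhammer y (Suc a)"
proof -
  have "Gamma (real a + 1) = fact a"
    using Gamma_fact[of a] by (simp add: add.commute)
  moreover have "pochhammer y (Suc a) = Gamma (real a + 1 + y) / Gamma y"
    using assms by (subst pochhammer_Gamma) (auto simp: add_ac elim!: nonpos_Ints_cases)
  moreover have "Gamma y \<noteq> 0"
    using Gamma_real_pos[OF assms] by simp
  ultimately show ?thesis by (simp add: Beta_def)
qed

lemma has_integral_Beta_nat:
  "((\<lambda>t::real. t ^ a * (1 - t) ^ b) has_integral Beta (real a + 1) (real b + 1)) {0..1}"
proof (rule has_integral_spike_finite)
  show "((\<lambda>t. t powr (real a + 1 - 1) * (1 - t) powr (real b + 1 - 1)) has_integral
          Beta (real a + 1) (real b + 1)) {0..1}"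
    by (rule has_integral_Beta_real) auto
  show "t ^ a * (1 - t) ^ b = t powr (real a + 1 - 1) * (1 - t) powr (real b + 1 - 1)"
    if "t \<in> {0..1} - {0, 1}" for t :: real
    \<comment> \<open>the endpoints must be excluded since \<open>0 powr 0 = 0\<close>\<close>
    using that by (simp add: powr_realpow)
qed simp

lemma sum_alternating_binomial_Beta_even:
  "(\<Sum>j\<le>N. (-1) ^ j * real (N choose j) * Beta (real (2 * j) + 1) (real b + 1)) =
   (\<Sum>j\<le>N. real (N choose j) * Beta (real j + 1) (real (N + b) + 1))"
proof -
  have "(1 - t\<^sup>2) ^ N * (1 - t) ^ b =
      (\<Sum>j\<le>N. (-1) ^ j * real (N choose j) * (t ^ (2 * j) * (1 - t) ^ b))" for t :: real
  proof -
    have "(- t\<^sup>2) ^ j = (-1) ^ j * t ^ (2 * j)" for j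
      by (subst power_mult) (rule power_minus)
    then have "(1 - t\<^sup>2) ^ N = (\<Sum>j\<le>N. (-1) ^ j * real (N choose j) * t ^ (2 * j))"
      using binomial_ring[of "- t\<^sup>2" 1 N] by (simp add: mult_ac)
    then show ?thesis
      by (simp add: sum_distrib_right mult.assoc)
  qed
  then have "((\<lambda>t. (1 - t\<^sup>2) ^ N * (1 - t) ^ b) has_integral
      (\<Sum>j\<le>N. (-1) ^ j * real (N choose j) * Beta (real (2 * j) + 1) (real b + 1))) {0..1}"
    by (simp only:) (intro has_integral_sum finite_atMost has_integral_mult_right has_integral_Beta_nat)
  moreover have "(1 - t\<^sup>2) ^ N * (1 - t) ^ b =
      (\<Sum>j\<le>N. real (N choose j) * (t ^ j * (1 - t) ^ (N + b)))" for t :: real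
  proof -
    have "1 - t\<^sup>2 = (t + 1) * (1 - t)"
      by (simp add: power2_eq_square algebra_simps)
    then have "(1 - t\<^sup>2) ^ N * (1 - t) ^ b = (t + 1) ^ N * (1 - t) ^ (N + b)"
      by (simp only: power_add power_mult_distrib mult.assoc)
    also have "(t + 1) ^ N = (\<Sum>j\<le>N. real (N choose j) * t ^ j)"
      using binomial_ring[of t 1 N] by simp
    finally show ?thesis by (simp add: sum_distrib_right mult.assoc)
  qed
  then have "((\<lambda>t. (1 - t\<^sup>2) ^ N * (1 - t) ^ b) has_integral
      (\<Sum>j\<le>N. real (N choose j) * Beta (real j + 1) (real (N + b) + 1))) {0..1}"
    by (simp only:) (intro has_integral_sum finite_atMost has_integral_mult_right has_integral_Beta_nat)
  ultimately show ?thesis by (rule has_integral_unique)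
qed

lemma hypergeom_2F1_neg_one_eq_G_sum:
  assumes "m \<ge> 1" and "n \<ge> 1"
  shows "hypergeom [1, 1 - real n] [real m + real n] (-1) =
    fact (m - 1) * (real m + real n - 1) * (\<Sum>k=1..n. (-1) ^ (k - 1) * real (n choose k) * G m k)"
proof -
  obtain N b where n: "n = Suc N" and m: "m = Suc b"
    using assms by (metis Suc_le_D One_nat_def)
  have G_summand_eq_Beta: "fact b / (\<Prod>i=1..m. 2 * real j + real i) = Beta (real (2 * j) + 1) (real b + 1)" for j
    using Beta_of_nat_plus1_left[of "2 * real j + 1" b]
    by (simp add: Beta_commute m pochhammer_plus1_eq_prod)
  have Beta_eq_hypergeom_summand: "real (m + N) * Beta (real j + 1) (real (N + b) + 1) =
      fact j / pochhammer (real m + real n) j" for j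
    using Beta_of_nat_plus1_left[of "real (N + b) + 1" j]
    by (simp add: pochhammer_rec m n add_ac)
  have "fact (m - 1) * (real m + real n - 1) * (\<Sum>k=1..n. (-1) ^ (k - 1) * real (n choose k) * G m k) =
      real (m + N) * (\<Sum>j\<le>N. (-1) ^ j * real (N choose j) * (fact b / (\<Prod>i=1..m. 2 * real j + real i)))"
    unfolding G_def binomial_transform_partial_sums
    by (simp add: m n lessThan_Suc_atMost sum_distrib_left mult_ac)
  also have "\<dots> = real (m + N) * (\<Sum>j\<le>N. real (N choose j) * Beta (real j + 1) (real (N + b) + 1))"
    by (simp only: G_summand_eq_Beta sum_alternating_binomial_Beta_even)
  also have "\<dots> = (\<Sum>j\<le>N. real (N choose j) * fact j / pochhammer (real m + real n) j)"
    unfolding sum_distrib_left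
    by (intro sum.cong refl) (metis Beta_eq_hypergeom_summand mult.left_commute times_divide_eq_right)
  also have "\<dots> = hypergeom [1, 1 - real n] [real m + real n] (-1)"
    using hypergeom_2F1_one_neg_one[of N] n by simp
  finally show ?thesis ..
qed

theorem corollary3p6:
  fixes m n s :: nat
  assumes "m \<ge> 1" and "n \<ge> 1" and "s \<ge> 1"
  shows "hypergeom (replicate s (1/2) @ [1 - real n]) (replicate s (3/2)) 1
           = (\<Sum>k=1..n. (-1) ^ (k - 1) * real (n choose k) * Hbar k s) \<and>
         hypergeom (replicate s (1/2) @ [1 - real n]) (replicate s (3/2)) (-1)
           = (\<Sum>k=1..n. (-1) ^ (k - 1) * real (n choose k) * Hbar_alt k s) \<and>
         hypergeom [1, 1 - real n] [real m + real n] (-1)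
           = fact (m - 1) * (real m + real n - 1) * (\<Sum>k=1..n. (-1) ^ (k - 1) * real (n choose k) * G m k)"
proof -
  have "hypergeom (replicate s (1/2) @ [1 - real n]) (replicate s (3/2)) 1
      = (\<Sum>k=1..n. (-1) ^ (k - 1) * real (n choose k) * Hbar k s)"
    using hypergeom_halves_binomial_transform[OF assms(2), of s 1] by (simp add: Hbar_def)
  moreover have "hypergeom (replicate s (1/2) @ [1 - real n]) (replicate s (3/2)) (-1)
      = (\<Sum>k=1..n. (-1) ^ (k - 1) * real (n choose k) * Hbar_alt k s)"
    using hypergeom_halves_binomial_transform[OF assms(2), of s "-1"] by (simp add: Hbar_alt_def)
  ultimately show ?thesis
    using hypergeom_2F1_neg_one_eq_G_sum[OF assms(1,2)] by blast
qed

end
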